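(* In the setting described in the context, let $D\subseteq A\subseteq D\cup T$ and $L\in\Pi_A$. Then $\dim\operatorname{span}\langle L,L^*\rangle_A=|L|$ if $L$ is shorted (with respect to $A$), and $\dim\operatorname{span}\langle L,L^*\rangle_A=2|L|-1$ otherwise.
   Context: Let $n\ge4$, $V=\{0,\dots,n-1\}$, and let $E=\{(u,v)\in V\times V:u\ne v\}$ be the set of arcs, written $uv$. Let $\chi_e\in\mathbb R^E$ be unit vectors and $\chi_F=\sum_{e\in F}\chi_e$. Let $\delta^\pm(w)$ be the arcs leaving/entering $w$, let $\delta^+(S)=\{uv:u\in S,v\notin S\}$, let $\mathcal S=\{S\subset V:2\le|S|\le n-2\}$, and let $x(F)=\sum_{e\in F}x_e$. The polytope is $P^n=\{x\in\mathbb R^E: x(\delta^+(w))=x(\delta^-(w))=1\ \forall w,\ x(\delta^+(S))\ge1\ \forall S\in\mathcal S,\ x\ge0\}$. Fix $\bar x\in P^n\cap\{0,\tfrac12\}^E$ and let $E_{\bar x}=\{e:\bar x_e=\tfrac12\}$. For $a\in\{0,1\}^E$ let $\mathrm{pr}(a)=\sum_{e\in E_{\bar x}}a_e\chi_e$. Let $\mathcal S_{\bar x}=\{S\in\mathcal S:\bar x(\delta^+(S))=1\}$. Define the sets $$D=\{\mathrm{pr}(\chi_{\delta^+(u)}),\mathrm{pr}(\chi_{\delta^-(u)}):u\in V\}, \qquad T=\{\mathrm{pr}(\chi_{\delta^+(S)}):S\in\mathcal S_{\bar x}\}.$$ Every vector of $D\cup T$ equals $\chi_{e_1}+\chi_{e_2}$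 for two distinct arcs $e_1,e_2\in E_{\bar x}$; it is written $[e_1,e_2]=[e_2,e_1]$. Let $A$ be a set with $D\subseteq A\subseteq D\cup T$. On $E_{\bar x}$ define the relation $e\sim_A e'$ iff there is $\bar e\in E_{\bar x}$ with $[e,\bar e]\in A$ and $[\bar e,e']\in A$. Let $\equiv_A$ be its transitive closure; this is an equivalence relation. The equivalence classes are called circuits, and they form the circuit partition $\Pi_A$ of $E_{\bar x}$. For $L\in\Pi_A$, the set $\{\bar e\in E_{\bar x}:\exists e\in L,\ [e,\bar e]\in A\}$ is nonempty and contained in a unique circuit, denoted $L^*_A$ and called the dual of $L$. The pair $\{L,L^*_A\}$ is a circuit pair. $L$ is called shorted if $L^*_A=L$. Define $\langle L,L^*\rangle_A=\{[e,\bar e]\in A: e\in L,\ \bar e\in L^*_A\}$. *)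

theory Defs
  imports "HOL-Analysis.Analysis" "HOL-Library.Function_Algebras"
begin

type_synonym arc = "nat \<times> nat"
type_synonym vec = "arc \<Rightarrow> real"

definition V :: "nat \<Rightarrow> nat set" where "V n = {0..<n}"

definition arcs :: "nat \<Rightarrow> arc set" where
  "arcs n = {(u,v). u \<in> V n \<and> v \<in> V n \<and> u \<noteq> v}"

definition delta_out :: "nat \<Rightarrow> nat \<Rightarrow> arc set" where
  "delta_out n w = {(u,v) \<in> arcs n. u = w}"

definition delta_in :: "nat \<Rightarrow> nat \<Rightarrow> arc set" where
  "delta_in n w = {(u,v) \<in> arcs n. v = w}"

definition delta_out_set :: "nat \<Rightarrow> nat set \<Rightarrow> arc set" where
  "delta_out_set n S = {(u,v) \<in> arcs n. u \<in> S \<and> v \<notin> S}"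

definition cutsets :: "nat \<Rightarrow> nat set set" where
  "cutsets n = {S. S \<subseteq> V n \<and> 2 \<le> card S \<and> card S \<le> n - 2}"

definition xsum :: "vec \<Rightarrow> arc set \<Rightarrow> real" where
  "xsum x F = (\<Sum>e\<in>F. x e)"

text \<open>The polytope P^n; vectors x in R^E are functions on arcs (values off E are irrelevant).\<close>
definition Pn :: "nat \<Rightarrow> vec set" where
  "Pn n = {x. (\<forall>w\<in>V n. xsum x (delta_out n w) = 1 \<and> xsum x (delta_in n w) = 1)
            \<and> (\<forall>S\<in>cutsets n. xsum x (delta_out_set n S) \<ge> 1)
            \<and> (\<forall>e\<in>arcs n. x e \<ge> 0)}"

definition chi :: "arc set \<Rightarrow> vec" where
  "chi F = (\<lambda>e. if e \<in> F then 1 else 0)"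

definition Ehalf :: "nat \<Rightarrow> vec \<Rightarrow> arc set" where
  "Ehalf n x = {e \<in> arcs n. x e = 1/2}"

definition pr :: "nat \<Rightarrow> vec \<Rightarrow> vec \<Rightarrow> vec" where
  "pr n x a = (\<lambda>e. if e \<in> Ehalf n x then a e else 0)"

definition tight_sets :: "nat \<Rightarrow> vec \<Rightarrow> nat set set" where
  "tight_sets n x = {S \<in> cutsets n. xsum x (delta_out_set n S) = 1}"

definition Dset :: "nat \<Rightarrow> vec \<Rightarrow> vec set" where
  "Dset n x = {pr n x (chi (delta_out n u)) | u. u \<in> V n}
            \<union> {pr n x (chi (delta_in n u)) | u. u \<in> V n}"

definition Tset :: "nat \<Rightarrow> vec \<Rightarrow> vec set" where
  "Tset n x = {pr n x (chi (delta_out_set n S)) | S. S \<in> tight_sets n x}"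

definition pairvec :: "arc \<Rightarrow> arc \<Rightarrow> vec" where
  "pairvec e1 e2 = (\<lambda>a. chi {e1} a + chi {e2} a)"

definition simrel :: "nat \<Rightarrow> vec \<Rightarrow> vec set \<Rightarrow> arc rel" where
  "simrel n x A = {(e, e'). e \<in> Ehalf n x \<and> e' \<in> Ehalf n x \<and>
      (\<exists>eb\<in>Ehalf n x. pairvec e eb \<in> A \<and> pairvec eb e' \<in> A)}"

definition equivrel :: "nat \<Rightarrow> vec \<Rightarrow> vec set \<Rightarrow> arc rel" where
  "equivrel n x A = trancl (simrel n x A)"

definition circuits :: "nat \<Rightarrow> vec \<Rightarrow> vec set \<Rightarrow> arc set set" where
  "circuits n x A = Ehalf n x // equivrel n x A"

definition neighbours :: "nat \<Rightarrow> vec \<Rightarrow> vec set \<Rightarrow> arc set \<Rightarrow> arc set" where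
  "neighbours n x A L = {eb \<in> Ehalf n x. \<exists>e\<in>L. pairvec e eb \<in> A}"

definition dual :: "nat \<Rightarrow> vec \<Rightarrow> vec set \<Rightarrow> arc set \<Rightarrow> arc set" where
  "dual n x A L = (THE L'. L' \<in> circuits n x A \<and> neighbours n x A L \<subseteq> L')"

definition shorted :: "nat \<Rightarrow> vec \<Rightarrow> vec set \<Rightarrow> arc set \<Rightarrow> bool" where
  "shorted n x A L \<longleftrightarrow> dual n x A L = L"

definition pairset :: "nat \<Rightarrow> vec \<Rightarrow> vec set \<Rightarrow> arc set \<Rightarrow> vec set" where
  "pairset n x A L = {v \<in> A. \<exists>e\<in>L. \<exists>eb\<in>dual n x A L. v = pairvec e eb}"

definition vscale :: "real \<Rightarrow> vec \<Rightarrow> vec" where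
  "vscale c f = (\<lambda>e. c * f e)"

interpretation vec_vs: vector_space vscale
  by unfold_locales (auto simp: vscale_def algebra_simps)

abbreviation vspan :: "vec set \<Rightarrow> vec set" where
  "vspan \<equiv> vec_vs.span"

abbreviation vdim :: "vec set \<Rightarrow> nat" where
  "vdim \<equiv> vec_vs.dim"

end

theory Submission
  imports Defs
begin

text \<open>Each vertex is the tail of exactly two half-integral arcs, so the out-stars in D pair
  every arc e of E_x with a mate e' such that [e, e'] is in A. Through these pairs the
  relation ~ is reflexive, all neighbours of a circuit L lie in one circuit L*, and the mate
  map is a bijection from L onto L*. Chaining [a, b] - [c, b] along ~ shows that
  span<L, L*> contains every difference chi_e - chi_e' with e, e' in L. If L* = L, adding
  [e, e'] recovers every chi_e, so the span is R^L. Otherwise L and L* are disjoint, the span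
  lies in the hyperplane x(L) = x(L*), and together with a single chi_e it is R^(L u L*),
  of dimension 2|L|; hence the span has dimension 2|L| - 1.\<close>

lemma pairvec_commute: "pairvec a b = pairvec b a"
  by (auto simp: pairvec_def fun_eq_iff)

lemma pairvec_eq_chi_add: "pairvec a b = chi {a} + chi {b}"
  by (simp add: pairvec_def fun_eq_iff)

lemma finite_arcs: "finite (arcs n)"
  by (rule finite_subset[of _ "V n \<times> V n"]) (auto simp: arcs_def V_def)

lemma finite_Ehalf: "finite (Ehalf n x)"
  by (rule finite_subset[OF _ finite_arcs[of n]]) (auto simp: Ehalf_def)

lemma sum_fun_apply: "(\<Sum>y\<in>S. g y) a = (\<Sum>y\<in>S. g y a)"
  by (induction S rule: infinite_finite_induct) auto

lemma independent_chi_singletons: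
  assumes "finite K"
  shows "vec_vs.independent ((\<lambda>a. chi {a}) ` K)"
proof (rule vec_vs.independent_if_scalars_zero)
  let ?Q = "(\<lambda>a. chi {a}) ` K"
  show "finite ?Q" using assms by simp
  fix f q assume sum0: "(\<Sum>y\<in>?Q. vscale (f y) y) = 0" and q: "q \<in> ?Q"
  then obtain a where a: "q = chi {a}" by auto
  have "0 = (\<Sum>y\<in>?Q. vscale (f y) y) a" using sum0 by simp
  also have "\<dots> = (\<Sum>y\<in>?Q. f y * y a)" by (simp add: sum_fun_apply vscale_def)
  also have "\<dots> = f q * q a + (\<Sum>y\<in>?Q - {q}. f y * y a)"
    by (rule sum.remove[OF \<open>finite ?Q\<close> q])
  also have "(\<Sum>y\<in>?Q - {q}. f y * y a) = 0"
    by (rule sum.neutral) (auto simp: a chi_def split: if_splits)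
  finally show "f q = 0" using a by (simp add: chi_def)
qed

lemma dim_span_chi_singletons:
  assumes "finite K"
  shows "vdim (vspan ((\<lambda>a. chi {a}) ` K)) = card K"
proof -
  have "inj_on (\<lambda>a. chi {a}) K"
    by (rule inj_onI) (metis chi_def insertI1 singletonD zero_neq_one)
  then show ?thesis
    using vec_vs.dim_span_eq_card_independent[OF independent_chi_singletons[OF assms]]
    by (simp add: card_image)
qed

lemma dim_insert_notin_span:
  assumes "finite S" and "v \<notin> vspan S"
  shows "vdim (insert v S) = vdim S + 1"
proof -
  obtain B where B: "B \<subseteq> S" "vec_vs.independent B" "S \<subseteq> vspan B" "card B = vdim S"
    by (rule vec_vs.basis_exists)
  have "v \<notin> vspan B" using assms(2) vec_vs.span_mono[OF B(1)] by blast
  show ?thesis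
  proof (rule vec_vs.dim_unique)
    show "insert v B \<subseteq> insert v S" using B(1) by blast
    show "insert v S \<subseteq> vspan (insert v B)"
      using B(3) vec_vs.span_mono[of B "insert v B"] vec_vs.span_base[of v "insert v B"] by blast
    show "vec_vs.independent (insert v B)"
      using vec_vs.independent_insertI[OF \<open>v \<notin> vspan B\<close> B(2)] .
    show "card (insert v B) = vdim S + 1"
      using \<open>v \<notin> vspan B\<close> vec_vs.span_base[of v B] finite_subset[OF B(1) assms(1)] B(4)
      by (subst card_insert_disjoint) auto
  qed
qed

lemma chi_notin_span_cross_pairs:
  assumes "finite L" "finite M" "L \<inter> M = {}" "e \<in> L"
    and "S \<subseteq> {pairvec a b | a b. a \<in> L \<and> b \<in> M}"
  shows "chi {e} \<notin> vspan S"
proof -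
  \<comment> \<open>the hyperplane x(L) = x(M) contains every cross pair but no unit vector of L\<close>
  define P where "P = {f :: vec. sum f L = sum f M}"
  have "vec_vs.subspace P"
    unfolding vec_vs.subspace_def P_def
    by (auto simp: vscale_def sum.distrib sum_distrib_left[symmetric])
  moreover have "S \<subseteq> P"
  proof
    fix v assume "v \<in> S"
    then obtain a b where "a \<in> L" "b \<in> M" "v = pairvec a b" using assms(5) by blast
    moreover from this have "a \<notin> M" "b \<notin> L" using assms(3) by auto
    ultimately show "v \<in> P"
      using assms(1,2) by (simp add: P_def pairvec_eq_chi_add sum.distrib chi_def)
  qed
  ultimately have "vspan S \<subseteq> P" by (rule vec_vs.span_minimal[rotated])
  moreover have "chi {e} \<notin> P"
    using assms(1-4) by (auto simp: P_def chi_def)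
  ultimately show ?thesis by blast
qed

lemma dim_span_cross_pairs:
  assumes "finite L" "finite M" "L \<inter> M = {}" "e \<in> L"
    and S: "S \<subseteq> {pairvec a b | a b. a \<in> L \<and> b \<in> M}"
    and span_eq: "vspan (insert (chi {e}) S) = vspan ((\<lambda>a. chi {a}) ` (L \<union> M))"
  shows "vdim (vspan S) = card L + card M - 1"
proof -
  have "finite S"
    by (rule finite_subset[OF S], rule finite_subset[of _ "(\<lambda>(a, b). pairvec a b) ` (L \<times> M)"])
      (use assms(1,2) in auto)
  have "vdim (vspan S) + 1 = vdim (insert (chi {e}) S)"
    using dim_insert_notin_span[OF \<open>finite S\<close> chi_notin_span_cross_pairs[OF assms(1-5)]] by simp
  also have "\<dots> = vdim (vspan ((\<lambda>a. chi {a}) ` (L \<union> M)))"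
    by (metis span_eq vec_vs.dim_span)
  also have "\<dots> = card L + card M"
    using dim_span_chi_singletons assms(1-3) by (simp add: card_Un_disjoint)
  finally show ?thesis by simp
qed

lemma card_Ehalf_tail:
  assumes "xb \<in> Pn n" "\<forall>e\<in>arcs n. xb e \<in> {0, 1/2}" "u \<in> V n"
  shows "card {e \<in> Ehalf n xb. fst e = u} = 2"
proof -
  let ?out = "delta_out n u"
  have fin: "finite ?out"
    by (rule finite_subset[OF _ finite_arcs[of n]]) (auto simp: delta_out_def)
  have "1 = xsum xb ?out" using assms(1,3) by (simp add: Pn_def)
  also have "\<dots> = (\<Sum>e\<in>?out. if xb e = 1/2 then 1/2 else 0)"
    unfolding xsum_def by (rule sum.cong) (use assms(2) in \<open>auto simp: delta_out_def\<close>)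
  also have "\<dots> = (\<Sum>e\<in>{e\<in>?out. xb e = 1/2}. 1/2)"
    using sum.inter_filter[OF fin, of "\<lambda>_. 1/2 :: real" "\<lambda>e. xb e = 1/2"] by simp
  also have "{e\<in>?out. xb e = 1/2} = {e \<in> Ehalf n xb. fst e = u}"
    by (auto simp: delta_out_def Ehalf_def)
  finally have "1 = real (card {e \<in> Ehalf n xb. fst e = u}) / 2" by simp
  then show ?thesis by linarith
qed

definition out_mate :: "nat \<Rightarrow> vec \<Rightarrow> arc \<Rightarrow> arc" where
  "out_mate n xb e = (THE e'. e' \<in> Ehalf n xb \<and> fst e' = fst e \<and> e' \<noteq> e)"

lemma Ehalf_tail_eq_out_mate:
  assumes "xb \<in> Pn n" "\<forall>e\<in>arcs n. xb e \<in> {0, 1/2}" "e \<in> Ehalf n xb"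
  shows "{a \<in> Ehalf n xb. fst a = fst e} = {e, out_mate n xb e}" and "out_mate n xb e \<noteq> e"
proof -
  have "fst e \<in> V n" using assms(3) by (auto simp: Ehalf_def arcs_def)
  then obtain a b where ab: "{a' \<in> Ehalf n xb. fst a' = fst e} = {a, b}" "a \<noteq> b"
    using card_Ehalf_tail[OF assms(1,2) \<open>fst e \<in> V n\<close>] unfolding card_2_iff by blast
  have "e = a \<or> e = b" using assms(3) ab(1) by blast
  then obtain e' where e': "{a' \<in> Ehalf n xb. fst a' = fst e} = {e, e'}" "e' \<noteq> e"
  proof
    assume "e = a" with ab that show ?thesis by blast
  next
    assume "e = b" with ab that[of a] show ?thesis by (simp add: insert_commute)
  qed
  have "out_mate n xb e = e'"
    unfolding out_mate_def by (rule the_equality) (use e' in \<open>blast+\<close>)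
  with e' show "{a \<in> Ehalf n xb. fst a = fst e} = {e, out_mate n xb e}" "out_mate n xb e \<noteq> e"
    by simp_all
qed

lemma out_mate_in_Ehalf:
  assumes "xb \<in> Pn n" "\<forall>e\<in>arcs n. xb e \<in> {0, 1/2}" "e \<in> Ehalf n xb"
  shows "out_mate n xb e \<in> Ehalf n xb"
  using Ehalf_tail_eq_out_mate(1)[OF assms] by blast

lemma out_mate_out_mate:
  assumes "xb \<in> Pn n" "\<forall>e\<in>arcs n. xb e \<in> {0, 1/2}" "e \<in> Ehalf n xb"
  shows "out_mate n xb (out_mate n xb e) = e"
proof -
  let ?e' = "out_mate n xb e"
  have "?e' \<in> Ehalf n xb" "fst ?e' = fst e" "?e' \<noteq> e"
    using Ehalf_tail_eq_out_mate[OF assms] by blast+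
  then have "{?e', out_mate n xb ?e'} = {e, ?e'}" "out_mate n xb ?e' \<noteq> ?e'"
    using Ehalf_tail_eq_out_mate[OF assms]
      Ehalf_tail_eq_out_mate[OF assms(1,2) \<open>?e' \<in> Ehalf n xb\<close>]
    by simp_all
  then show ?thesis by blast
qed

lemma pairvec_out_mate_in_Dset:
  assumes "xb \<in> Pn n" "\<forall>e\<in>arcs n. xb e \<in> {0, 1/2}" "e \<in> Ehalf n xb"
  shows "pairvec e (out_mate n xb e) \<in> Dset n xb"
proof -
  have "pairvec e (out_mate n xb e) = chi {a \<in> Ehalf n xb. fst a = fst e}"
    using Ehalf_tail_eq_out_mate[OF assms] by (auto simp: pairvec_def chi_def)
  also have "{a \<in> Ehalf n xb. fst a = fst e} = Ehalf n xb \<inter> delta_out n (fst e)"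
    by (auto simp: Ehalf_def delta_out_def)
  also have "chi (Ehalf n xb \<inter> delta_out n (fst e)) = pr n xb (chi (delta_out n (fst e)))"
    by (simp add: pr_def chi_def fun_eq_iff)
  finally show ?thesis
    using assms(3) unfolding Dset_def by (auto simp: Ehalf_def arcs_def)
qed

locale arc_pairing =
  fixes n :: nat and xb :: vec and A :: "vec set" and mate :: "arc \<Rightarrow> arc"
  assumes mate_in_Ehalf: "e \<in> Ehalf n xb \<Longrightarrow> mate e \<in> Ehalf n xb"
    and mate_mate: "e \<in> Ehalf n xb \<Longrightarrow> mate (mate e) = e"
    and pairvec_mate_in: "e \<in> Ehalf n xb \<Longrightarrow> pairvec e (mate e) \<in> A"
begin

lemma equiv_equivrel: "equiv (Ehalf n xb) (equivrel n xb A)"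
  unfolding equivrel_def
proof (rule equivI)
  show "(simrel n xb A)\<^sup>+ \<subseteq> Ehalf n xb \<times> Ehalf n xb"
    by (rule trancl_subset_Sigma) (auto simp: simrel_def)
  show "refl_on (Ehalf n xb) ((simrel n xb A)\<^sup>+)"
  proof (rule refl_onI, rule r_into_trancl)
    fix e assume e: "e \<in> Ehalf n xb"
    have "pairvec (mate e) e \<in> A" using pairvec_mate_in[OF e] by (simp add: pairvec_commute)
    then show "(e, e) \<in> simrel n xb A"
      unfolding simrel_def using e mate_in_Ehalf[OF e] pairvec_mate_in[OF e] by blast
  qed
  have "sym (simrel n xb A)" by (auto simp: sym_def simrel_def pairvec_commute)
  then show "sym ((simrel n xb A)\<^sup>+)" by (rule sym_trancl)
qed (rule trans_trancl)

lemma equivrel_across_pairs: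
  assumes "(x, y) \<in> equivrel n xb A"
    and "w \<in> Ehalf n xb" "pairvec w x \<in> A" "c \<in> Ehalf n xb" "pairvec y c \<in> A"
  shows "(w, c) \<in> equivrel n xb A"
  using assms(1,4,5) unfolding equivrel_def
proof (induction y arbitrary: c rule: trancl_induct)
  case (base y)
  then obtain b where "b \<in> Ehalf n xb" "x \<in> Ehalf n xb" "y \<in> Ehalf n xb"
      "pairvec x b \<in> A" "pairvec b y \<in> A"
    by (auto simp: simrel_def)
  then have "(w, b) \<in> simrel n xb A" "(b, c) \<in> simrel n xb A"
    using assms(2,3) base.prems by (auto simp: simrel_def)
  then show ?case by (rule trancl_into_trancl[OF r_into_trancl])
next
  case (step y z)
  then obtain b where b: "b \<in> Ehalf n xb" "z \<in> Ehalf n xb" "pairvec y b \<in> A" "pairvec b z \<in> A"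
    by (auto simp: simrel_def)
  then have "(b, c) \<in> simrel n xb A" using step.prems by (auto simp: simrel_def)
  with step.IH[OF b(1,3)] show ?case by (rule trancl_into_trancl)
qed

lemma circuit_subset_Ehalf: "L \<in> circuits n xb A \<Longrightarrow> L \<subseteq> Ehalf n xb"
  using in_quotient_imp_subset[OF equiv_equivrel] by (simp add: circuits_def)

lemma circuit_nonempty: "L \<in> circuits n xb A \<Longrightarrow> L \<noteq> {}"
  using in_quotient_imp_non_empty[OF equiv_equivrel] by (simp add: circuits_def)

lemma circuit_eq_class:
  assumes "L \<in> circuits n xb A" "e \<in> L"
  shows "L = equivrel n xb A `` {e}"
proof -
  obtain x where "L = equivrel n xb A `` {x}"
    using assms(1) unfolding circuits_def by (rule quotientE)
  with assms(2) show ?thesis using equiv_class_eq[OF equiv_equivrel] by auto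
qed

lemma neighbours_subset_class_mate:
  assumes "L \<in> circuits n xb A" "e \<in> L"
  shows "neighbours n xb A L \<subseteq> equivrel n xb A `` {mate e}"
proof
  fix b assume "b \<in> neighbours n xb A L"
  then obtain a where b: "b \<in> Ehalf n xb" and a: "a \<in> L" "pairvec a b \<in> A"
    by (auto simp: neighbours_def)
  have e: "e \<in> Ehalf n xb" using assms circuit_subset_Ehalf by blast
  then have "pairvec (mate e) e \<in> A" using pairvec_mate_in by (simp add: pairvec_commute)
  moreover have "(e, a) \<in> equivrel n xb A" using circuit_eq_class[OF assms] a(1) by blast
  ultimately have "(mate e, b) \<in> equivrel n xb A"
    using equivrel_across_pairs mate_in_Ehalf[OF e] b a(2) by blast
  then show "b \<in> equivrel n xb A `` {mate e}" by blast
qed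

lemma dual_eq_class_mate:
  assumes "L \<in> circuits n xb A" "e \<in> L"
  shows "dual n xb A L = equivrel n xb A `` {mate e}"
  unfolding dual_def
proof (rule the_equality)
  have e: "e \<in> Ehalf n xb" using assms circuit_subset_Ehalf by blast
  then show "equivrel n xb A `` {mate e} \<in> circuits n xb A \<and>
      neighbours n xb A L \<subseteq> equivrel n xb A `` {mate e}"
    using neighbours_subset_class_mate[OF assms] quotientI[OF mate_in_Ehalf[OF e]]
    by (simp add: circuits_def)
  have "mate e \<in> neighbours n xb A L"
    using e assms(2) mate_in_Ehalf[OF e] pairvec_mate_in[OF e] by (auto simp: neighbours_def)
  then show "L' = equivrel n xb A `` {mate e}"
    if "L' \<in> circuits n xb A \<and> neighbours n xb A L \<subseteq> L'" for L'
    using that circuit_eq_class by blast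
qed

lemma mate_in_dual:
  assumes "L \<in> circuits n xb A" "e \<in> L"
  shows "mate e \<in> dual n xb A L"
proof -
  have "e \<in> Ehalf n xb" using assms circuit_subset_Ehalf by blast
  then show ?thesis
    using dual_eq_class_mate[OF assms] equiv_class_self[OF equiv_equivrel mate_in_Ehalf] by simp
qed

lemma dual_in_circuits:
  assumes "L \<in> circuits n xb A"
  shows "dual n xb A L \<in> circuits n xb A"
proof -
  obtain e where e: "e \<in> L" using circuit_nonempty[OF assms] by blast
  then have "mate e \<in> Ehalf n xb" using assms circuit_subset_Ehalf mate_in_Ehalf by blast
  then show ?thesis
    using dual_eq_class_mate[OF assms e] quotientI by (simp add: circuits_def)
qed

lemma neighbours_subset_dual:
  assumes "L \<in> circuits n xb A"
  shows "neighbours n xb A L \<subseteq> dual n xb A L"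
proof -
  obtain e where e: "e \<in> L" using circuit_nonempty[OF assms] by blast
  show ?thesis
    using dual_eq_class_mate[OF assms e] neighbours_subset_class_mate[OF assms e] by simp
qed

lemma dual_dual:
  assumes "L \<in> circuits n xb A"
  shows "dual n xb A (dual n xb A L) = L"
proof -
  obtain e where e: "e \<in> L" using circuit_nonempty[OF assms] by blast
  have "e \<in> Ehalf n xb" using assms e circuit_subset_Ehalf by blast
  have "dual n xb A (dual n xb A L) = equivrel n xb A `` {mate (mate e)}"
    using dual_eq_class_mate[OF dual_in_circuits[OF assms] mate_in_dual[OF assms e]] .
  also have "\<dots> = L"
    using mate_mate[OF \<open>e \<in> Ehalf n xb\<close>] circuit_eq_class[OF assms e] by simp
  finally show ?thesis .
qed

lemma card_dual:
  assumes "L \<in> circuits n xb A"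
  shows "card (dual n xb A L) = card L"
proof -
  let ?M = "dual n xb A L"
  have "mate ` L \<subseteq> ?M" "mate ` ?M \<subseteq> L"
    using mate_in_dual[OF assms] mate_in_dual[OF dual_in_circuits[OF assms]] dual_dual[OF assms]
    by auto
  moreover have "L \<union> ?M \<subseteq> Ehalf n xb"
    using circuit_subset_Ehalf assms dual_in_circuits by blast
  ultimately have "bij_betw mate L ?M"
    by (intro bij_betw_byWitness[where f' = mate]) (auto simp: mate_mate)
  then show ?thesis by (simp add: bij_betw_same_card)
qed

lemma chi_diff_in_span_pairset:
  assumes L: "L \<in> circuits n xb A" and x: "x \<in> L" and y: "y \<in> L"
  shows "chi {x} - chi {y} \<in> vspan (pairset n xb A L)"
proof -
  have closed: "c \<in> L" if "a \<in> L" "(a, c) \<in> (simrel n xb A)\<^sup>+" for a c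
    using circuit_eq_class[OF L that(1)] that(2) by (auto simp: equivrel_def)
  have simrel_step: "chi {a} - chi {c} \<in> vspan (pairset n xb A L)"
    if a: "a \<in> L" and ac: "(a, c) \<in> simrel n xb A" for a c
  proof -
    obtain b where b: "b \<in> Ehalf n xb" "pairvec a b \<in> A" "pairvec b c \<in> A"
      using ac by (auto simp: simrel_def)
    have "b \<in> dual n xb A L"
      using neighbours_subset_dual[OF L] b a by (auto simp: neighbours_def)
    moreover have "c \<in> L" using closed[OF a r_into_trancl[OF ac]] .
    ultimately have "pairvec a b \<in> pairset n xb A L" "pairvec c b \<in> pairset n xb A L"
      using a b pairvec_commute[of b c] by (auto simp: pairset_def)
    then have "pairvec a b - pairvec c b \<in> vspan (pairset n xb A L)"
      by (intro vec_vs.span_diff vec_vs.span_base)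
    then show ?thesis by (simp add: pairvec_eq_chi_add)
  qed
  have "(x, y) \<in> (simrel n xb A)\<^sup>+"
    using circuit_eq_class[OF L x] y by (simp add: equivrel_def)
  then show ?thesis
  proof (induction rule: trancl_induct)
    case (base y)
    then show ?case using simrel_step[OF x] by blast
  next
    case (step y z)
    have "chi {y} - chi {z} \<in> vspan (pairset n xb A L)"
      using simrel_step[OF closed[OF x step(1)] step(2)] .
    with step.IH have "(chi {x} - chi {y}) + (chi {y} - chi {z}) \<in> vspan (pairset n xb A L)"
      by (rule vec_vs.span_add)
    then have "chi {x} - chi {z} \<in> vspan (pairset n xb A L)"
      by (simp add: diff_add_eq)
    then show ?case by (simp add: fun_diff_def)
  qed
qed

lemma span_insert_chi_pairset:
  assumes L: "L \<in> circuits n xb A" and e: "e \<in> L"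
  shows "vspan (insert (chi {e}) (pairset n xb A L)) =
    vspan ((\<lambda>a. chi {a}) ` (L \<union> dual n xb A L))"
    (is "vspan ?T = vspan ?Q")
  unfolding vec_vs.span_eq
proof
  show "?T \<subseteq> vspan ?Q"
  proof
    fix v assume "v \<in> ?T"
    then consider "v = chi {e}" | a b where "a \<in> L" "b \<in> dual n xb A L" "v = chi {a} + chi {b}"
      by (auto simp: pairset_def pairvec_eq_chi_add)
    then show "v \<in> vspan ?Q"
      by cases (use e in \<open>auto intro: vec_vs.span_add vec_vs.span_base\<close>)
  qed
  have chi_L: "chi {a} \<in> vspan ?T" if "a \<in> L" for a
  proof -
    have "chi {e} - (chi {e} - chi {a}) \<in> vspan ?T"
      using chi_diff_in_span_pairset[OF L e that] vec_vs.span_mono[of _ ?T]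
      by (blast intro: vec_vs.span_diff vec_vs.span_base)
    then show ?thesis by simp
  qed
  have "chi {b} \<in> vspan ?T" if b: "b \<in> dual n xb A L" for b
  proof -
    have "mate b \<in> L" using mate_in_dual[OF dual_in_circuits[OF L] b] dual_dual[OF L] by simp
    moreover have "b \<in> Ehalf n xb" using b circuit_subset_Ehalf[OF dual_in_circuits[OF L]] by blast
    then have "pairvec (mate b) b \<in> A" using pairvec_mate_in by (simp add: pairvec_commute)
    ultimately have "pairvec (mate b) b \<in> ?T"
      using b unfolding pairset_def by blast
    then have "pairvec (mate b) b - chi {mate b} \<in> vspan ?T"
      using chi_L[OF \<open>mate b \<in> L\<close>] by (blast intro: vec_vs.span_diff vec_vs.span_base)
    then show ?thesis by (simp add: pairvec_eq_chi_add)
  qed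
  with chi_L show "?Q \<subseteq> vspan ?T" by blast
qed

lemma chi_in_span_pairset_shorted:
  assumes L: "L \<in> circuits n xb A" and shorted: "shorted n xb A L" and e: "e \<in> L"
  shows "chi {e} \<in> vspan (pairset n xb A L)"
proof -
  have "mate e \<in> L" using mate_in_dual[OF L e] shorted by (simp add: shorted_def)
  have "e \<in> Ehalf n xb" using L e circuit_subset_Ehalf by blast
  then have "pairvec e (mate e) \<in> pairset n xb A L"
    using e \<open>mate e \<in> L\<close> shorted pairvec_mate_in by (auto simp: pairset_def shorted_def)
  then have "pairvec e (mate e) + (chi {e} - chi {mate e}) \<in> vspan (pairset n xb A L)"
    using vec_vs.span_add[OF vec_vs.span_base chi_diff_in_span_pairset[OF L e \<open>mate e \<in> L\<close>]]
    by blast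
  then have "vscale (1/2) (pairvec e (mate e) + (chi {e} - chi {mate e}))
      \<in> vspan (pairset n xb A L)"
    by (rule vec_vs.span_scale)
  then show ?thesis by (simp add: vscale_def pairvec_eq_chi_add)
qed

theorem dim_span_pairset:
  assumes L: "L \<in> circuits n xb A"
  shows "vdim (vspan (pairset n xb A L)) =
           (if shorted n xb A L then card L else 2 * card L - 1)"
proof -
  obtain e where e: "e \<in> L" using circuit_nonempty[OF L] by blast
  have fin: "finite L" "finite (dual n xb A L)"
    using circuit_subset_Ehalf[OF L] circuit_subset_Ehalf[OF dual_in_circuits[OF L]]
    by (auto intro: finite_subset[OF _ finite_Ehalf])
  show ?thesis
  proof (cases "shorted n xb A L")
    case True
    have "vspan (pairset n xb A L) = vspan (insert (chi {e}) (pairset n xb A L))"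
      using chi_in_span_pairset_shorted[OF L True e] by (simp add: vec_vs.span_redundant)
    also have "\<dots> = vspan ((\<lambda>a. chi {a}) ` L)"
      using span_insert_chi_pairset[OF L e] True by (simp add: shorted_def)
    finally show ?thesis using True dim_span_chi_singletons[OF fin(1)] by simp
  next
    case False
    have "L \<inter> dual n xb A L = {}"
      using quotient_disj[OF equiv_equivrel] L dual_in_circuits[OF L] False
      by (fastforce simp: circuits_def shorted_def)
    moreover have "pairset n xb A L \<subseteq> {pairvec a b | a b. a \<in> L \<and> b \<in> dual n xb A L}"
      by (auto simp: pairset_def)
    ultimately have "vdim (vspan (pairset n xb A L)) = card L + card (dual n xb A L) - 1"
      using dim_span_cross_pairs fin e span_insert_chi_pairset[OF L e] by blast
    then show ?thesis using False card_dual[OF L] by simp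
  qed
qed

end

theorem mainTheorem8:
  fixes n :: nat and xb :: vec and A :: "vec set" and L :: "arc set"
  assumes "n \<ge> 4"
    and "xb \<in> Pn n"
    and "\<forall>e\<in>arcs n. xb e \<in> {0, 1/2}"
    and "Dset n xb \<subseteq> A" and "A \<subseteq> Dset n xb \<union> Tset n xb"
    and "L \<in> circuits n xb A"
  shows "vdim (vspan (pairset n xb A L)) =
           (if shorted n xb A L then card L else 2 * card L - 1)"
proof -
  interpret arc_pairing n xb A "out_mate n xb"
  proof
    fix e assume e: "e \<in> Ehalf n xb"
    show "out_mate n xb e \<in> Ehalf n xb" using out_mate_in_Ehalf[OF assms(2,3) e] .
    show "out_mate n xb (out_mate n xb e) = e" using out_mate_out_mate[OF assms(2,3) e] .
    show "pairvec e (out_mate n xb e) \<in> A"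
      using pairvec_out_mate_in_Dset[OF assms(2,3) e] assms(4) by blast
  qed
  show ?thesis using dim_span_pairset[OF assms(6)] .
qed

end
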